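(* Let $Y=\bigcap_{n\in\omega}U_n$, where each $U_n$ is an open $\pi$-dense subset of the Baire space $\mathcal N=(\omega^\omega,\tau_{\mathcal N})$. Then there is a Baire foliage tree on $Y$ (with the subspace topology from $\mathcal N$) that shoots into the standard foliage tree $\mathbf S$.
   Context: A tree is a pair $(Q,<)$ with $<$ irreflexive transitive such that every set of predecessors $\{v:v<x\}$ is well-ordered; $\mathrm{sons}(x)$ = set of immediate successors of $x$; a branch is an inclusion-maximal chain. A foliage tree is $\mathbf F=(\mathcal T,l)$ with $\mathcal T$ a tree (skeleton) and $\mathbf F_x=l(x)$ the leaf at node $x$. The standard foliage tree $\mathbf S$ has skeleton $(\omega^{<\omega},\subsetneq)$ and leaves $\mathbf S_x=\{p\in\omega^\omega:x\subseteq p\}$. $A\subseteq\omega^\omega$ is $\pi$-dense in the Baire space iff for every $y\in\omega^{<\omega}$ infinitely many $n$ satisfy $\mathbf S_{y^\frown\langle n\rangle}\subseteq A$. $\mathrm{fruit}_{\mathbf F}(A)=\bigcap_{x\in A}\mathbf F_x$; $\mathrm{flesh}\,\mathbf F=\bigcup_x\mathbf F_x$; $\mathrm{shoot}_{\mathbf F}(z)=\{\bigcup_{s\in C}\mathbf F_s: C$ cofinite subset of $\mathrm{sons}(z)\}$; $\mathrm{scope}_{\mathbf F}(p)=\{y:p\in\mathbf F_y\}$; for families $\gamma,\delta$, $\gamma\gg\delta$ means every nonempty $D\in\delta$ contains some nonempty $G\in\gamma$. A Baire foliage tree on a space $X$ is a foliage tree whose skeleton is isomorphic to $(\omega^{<\omega},\subsetneq)$,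 all of whose leaves are open in $X$, which is locally strict (for every non-maximal node $x$, $\mathbf F_x$ is the union of the pairwise disjoint family $(\mathbf F_s)_{s\in\mathrm{sons}(x)}$), has strict branches (it has a node and $\mathrm{fruit}_{\mathbf F}(B)$ is a singleton for every branch $B$), and whose leaf at its least node equals $X$. A foliage tree $\mathbf H$ shoots into a foliage tree $\mathbf F$ iff for every $p\in\mathrm{flesh}\,\mathbf H$ and every $y\in\mathrm{scope}_{\mathbf F}(p)$ there is $x\in\mathrm{scope}_{\mathbf H}(p)$ with $\mathrm{shoot}_{\mathbf H}(x)\gg\mathrm{shoot}_{\mathbf F}(y)$. *)

theory Defs
  imports "HOL-Analysis.Analysis" "HOL-Library.Sublist" "HOL-Library.Disjoint_Sets"
begin

text \<open>A foliage tree is given by a skeleton (node set Q with strict order lt)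
  and a leaf map l. The Baire space is nat => nat with the library product topology
  (nat being discrete).\<close>

definition is_tree :: "'a set \<Rightarrow> ('a \<Rightarrow> 'a \<Rightarrow> bool) \<Rightarrow> bool" where
  "is_tree Q lt \<longleftrightarrow>
     (\<forall>x\<in>Q. \<not> lt x x) \<and>
     (\<forall>x\<in>Q. \<forall>y\<in>Q. \<forall>z\<in>Q. lt x y \<and> lt y z \<longrightarrow> lt x z) \<and>
     (\<forall>x\<in>Q. let P = {v\<in>Q. lt v x} in
        (\<forall>a\<in>P. \<forall>b\<in>P. a = b \<or> lt a b \<or> lt b a) \<and>
        (\<forall>S. S \<subseteq> P \<and> S \<noteq> {} \<longrightarrow> (\<exists>m\<in>S. \<forall>s\<in>S. \<not> lt s m)))"

definition sons :: "'a set \<Rightarrow> ('a \<Rightarrow> 'a \<Rightarrow> bool) \<Rightarrow> 'a \<Rightarrow> 'a set" where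
  "sons Q lt x = {y\<in>Q. lt x y \<and> \<not> (\<exists>z\<in>Q. lt x z \<and> lt z y)}"

definition is_chain :: "'a set \<Rightarrow> ('a \<Rightarrow> 'a \<Rightarrow> bool) \<Rightarrow> 'a set \<Rightarrow> bool" where
  "is_chain Q lt C \<longleftrightarrow> C \<subseteq> Q \<and> (\<forall>a\<in>C. \<forall>b\<in>C. a = b \<or> lt a b \<or> lt b a)"

definition is_branch :: "'a set \<Rightarrow> ('a \<Rightarrow> 'a \<Rightarrow> bool) \<Rightarrow> 'a set \<Rightarrow> bool" where
  "is_branch Q lt B \<longleftrightarrow> is_chain Q lt B \<and> (\<forall>D. is_chain Q lt D \<and> B \<subseteq> D \<longrightarrow> D = B)"

definition fruit :: "('a \<Rightarrow> 'b set) \<Rightarrow> 'a set \<Rightarrow> 'b set" where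
  "fruit l A = (\<Inter>x\<in>A. l x)"

definition flesh :: "'a set \<Rightarrow> ('a \<Rightarrow> 'b set) \<Rightarrow> 'b set" where
  "flesh Q l = (\<Union>x\<in>Q. l x)"

definition shoot :: "'a set \<Rightarrow> ('a \<Rightarrow> 'a \<Rightarrow> bool) \<Rightarrow> ('a \<Rightarrow> 'b set) \<Rightarrow> 'a \<Rightarrow> 'b set set" where
  "shoot Q lt l z = {(\<Union>s\<in>C. l s) | C. C \<subseteq> sons Q lt z \<and> finite (sons Q lt z - C)}"

definition scope :: "'a set \<Rightarrow> ('a \<Rightarrow> 'b set) \<Rightarrow> 'b \<Rightarrow> 'a set" where
  "scope Q l p = {y\<in>Q. p \<in> l y}"

definition dominates :: "'b set set \<Rightarrow> 'b set set \<Rightarrow> bool" (infix "\<ggreater>\<^sub>f" 50) where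
  "\<gamma> \<ggreater>\<^sub>f \<delta> \<longleftrightarrow> (\<forall>D\<in>\<delta>. D \<noteq> {} \<longrightarrow> (\<exists>G\<in>\<gamma>. G \<noteq> {} \<and> G \<subseteq> D))"

definition shoots_into ::
  "'a set \<Rightarrow> ('a \<Rightarrow> 'a \<Rightarrow> bool) \<Rightarrow> ('a \<Rightarrow> 'b set) \<Rightarrow>
   'c set \<Rightarrow> ('c \<Rightarrow> 'c \<Rightarrow> bool) \<Rightarrow> ('c \<Rightarrow> 'b set) \<Rightarrow> bool" where
  "shoots_into QH ltH lH QF ltF lF \<longleftrightarrow>
     (\<forall>p\<in>flesh QH lH. \<forall>y\<in>scope QF lF p. \<exists>x\<in>scope QH lH p.
        shoot QH ltH lH x \<ggreater>\<^sub>f shoot QF ltF lF y)"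

definition baire_foliage_tree ::
  "'b::topological_space set \<Rightarrow> 'a set \<Rightarrow> ('a \<Rightarrow> 'a \<Rightarrow> bool) \<Rightarrow> ('a \<Rightarrow> 'b set) \<Rightarrow> bool" where
  "baire_foliage_tree X Q lt l \<longleftrightarrow>
     is_tree Q lt \<and>
     (\<exists>f. bij_betw f Q (UNIV :: nat list set) \<and>
          (\<forall>x\<in>Q. \<forall>y\<in>Q. lt x y \<longleftrightarrow> strict_prefix (f x) (f y))) \<and>
     (\<forall>x\<in>Q. openin (top_of_set X) (l x)) \<and>
     (\<forall>x\<in>Q. (\<exists>y\<in>Q. lt x y) \<longrightarrow>
        l x = (\<Union>s\<in>sons Q lt x. l s) \<and> disjoint_family_on l (sons Q lt x)) \<and>
     Q \<noteq> {} \<and> (\<forall>B. is_branch Q lt B \<longrightarrow> (\<exists>p. fruit l B = {p})) \<and>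
     (\<exists>r\<in>Q. (\<forall>y\<in>Q. y \<noteq> r \<longrightarrow> lt r y) \<and> l r = X)"

definition S_leaf :: "nat list \<Rightarrow> (nat \<Rightarrow> nat) set" where
  "S_leaf x = {p. \<forall>i<length x. p i = x ! i}"

definition pi_dense :: "(nat \<Rightarrow> nat) set \<Rightarrow> bool" where
  "pi_dense A \<longleftrightarrow> (\<forall>y::nat list. infinite {n. S_leaf (y @ [n]) \<subseteq> A})"

end

theory Submission
  imports Defs "HOL-Library.Countable"
begin

text \<open>
  Nodes of the tree are finite digit sequences, and each node carries a stage: a set of pairwise
  incomparable cylinders, one of them the trunk and the others junk; the leaf at the node is the
  trace on \<open>Y\<close> of their union. The rank of a cylinder is the number of initial sets
  \<open>U 0, U 1, \<dots>\<close> containing it. A digit is good for a cylinder if appending it raises the rank,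
  and \<open>\<pi>\<close>-density makes infinitely many digits good. At every node one active cylinder is split:
  the children with positive index receive its good one-digit extensions, while child 0 keeps all
  other cylinders and collects the bad extensions as junk.

  Along a branch with infinitely many positive digits the trunks climb through all ranks and shrink
  to a point of \<open>Y\<close>. Along an eventually zero branch the trunk climbs as well, and every junk
  cylinder is split again infinitely often, following a fixed schedule at odd depths; a point of
  \<open>Y\<close> trapped in junk forever would lie in arbitrarily small cylinders of one finite rank \<open>K\<close>,
  which is impossible since \<open>U K\<close> is open. Finally every basic cylinder \<open>S\<^sub>y\<close> becomes active at
  some node \<open>x\<close>, and then the shoot of \<open>x\<close> consists of traces of cofinitely many one-digit
  extensions of \<open>y\<close>.
\<close>

section \<open>Trees of finite sequences\<close>

lemma is_tree_strict_prefix: "is_tree (UNIV :: 'a list set) strict_prefix"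
  unfolding is_tree_def Let_def
proof (intro conjI ballI allI impI)
  fix x y z :: "'a list"
  show "\<not> strict_prefix x x" by simp
  show "strict_prefix x y \<and> strict_prefix y z \<Longrightarrow> strict_prefix x z"
    using prefix_order.less_trans by blast
next
  fix x a b :: "'a list"
  assume "a \<in> {v \<in> UNIV. strict_prefix v x}" "b \<in> {v \<in> UNIV. strict_prefix v x}"
  then have "prefix a x" "prefix b x" by (auto simp: strict_prefix_def)
  then have "prefix a b \<or> prefix b a" by (rule prefix_same_cases)
  then show "a = b \<or> strict_prefix a b \<or> strict_prefix b a" by (auto simp: strict_prefix_def)
next
  fix x :: "'a list" and S
  assume "S \<subseteq> {v \<in> UNIV. strict_prefix v x} \<and> S \<noteq> {}"
  then obtain k where "k \<in> S" by blast
  define m where "m = arg_min length (\<lambda>s. s \<in> S)"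
  have "m \<in> S" "\<forall>s. s \<in> S \<longrightarrow> length m \<le> length s"
    using arg_min_nat_lemma[of "\<lambda>s. s \<in> S" k length] \<open>k \<in> S\<close> unfolding m_def by blast+
  then show "\<exists>m\<in>S. \<forall>s\<in>S. \<not> strict_prefix s m"
    using prefix_length_less by (metis not_le)
qed

lemma sons_strict_prefix: "sons UNIV strict_prefix x = range (\<lambda>j. x @ [j])"
proof
  show "range (\<lambda>j. x @ [j]) \<subseteq> sons UNIV strict_prefix x"
  proof
    fix y assume "y \<in> range (\<lambda>j. x @ [j])"
    then obtain j where y: "y = x @ [j]" by blast
    have "\<not> (strict_prefix x z \<and> strict_prefix z y)" for z
      using prefix_length_less[of x z] prefix_length_less[of z y] y by auto
    then show "y \<in> sons UNIV strict_prefix x" using y by (auto simp: sons_def strict_prefix_def)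
  qed
  show "sons UNIV strict_prefix x \<subseteq> range (\<lambda>j. x @ [j])"
  proof
    fix y assume y: "y \<in> sons UNIV strict_prefix x"
    then have "strict_prefix x y" by (simp add: sons_def)
    then obtain a r where y_eq: "y = x @ a # r" by (auto elim: strict_prefixE')
    have "\<not> (strict_prefix x (x @ [a]) \<and> strict_prefix (x @ [a]) y)"
      using y by (auto simp: sons_def)
    then have "r = []" using y_eq by (auto simp: strict_prefix_def)
    then show "y \<in> range (\<lambda>j. x @ [j])" using y_eq by simp
  qed
qed

lemma branch_strict_prefix_insert:
  assumes "is_branch UNIV strict_prefix B" and "\<forall>e\<in>B. prefix z e \<or> prefix e z"
  shows "z \<in> B"
proof -
  have "is_chain UNIV strict_prefix (insert z B)"
    using assms unfolding is_branch_def is_chain_def by (auto simp: strict_prefix_def)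
  then show ?thesis using assms(1) unfolding is_branch_def by blast
qed

lemma branch_strict_prefix_cases:
  assumes "is_branch UNIV strict_prefix B" "a \<in> B" "b \<in> B"
  shows "prefix a b \<or> prefix b a"
  using assms unfolding is_branch_def is_chain_def by (auto simp: strict_prefix_def)

lemma branch_strict_prefix_lengths:
  assumes br: "is_branch UNIV strict_prefix B"
  shows "\<exists>x\<in>B. length x = n"
proof (induction n)
  case 0
  have "[] \<in> B" using branch_strict_prefix_insert[OF br] by simp
  then show ?case by auto
next
  case (Suc n)
  then obtain x where x: "x \<in> B" "length x = n" by blast
  have "\<exists>e\<in>B. strict_prefix x e"
  proof (rule ccontr)
    assume none: "\<not> (\<exists>e\<in>B. strict_prefix x e)"
    have "prefix e x" if "e \<in> B" for e
      using branch_strict_prefix_cases[OF br that x(1)] that none by (auto simp: strict_prefix_def)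
    then have "x @ [undefined] \<in> B"
      by (intro branch_strict_prefix_insert[OF br]) (auto intro: prefix_order.trans)
    then show False using none by (auto simp: strict_prefix_def)
  qed
  then obtain e where e: "e \<in> B" "strict_prefix x e" by blast
  have "Suc n \<le> length e" using prefix_length_less[OF e(2)] x(2) by simp
  moreover have "take (Suc n) e \<in> B"
  proof (rule branch_strict_prefix_insert[OF br], intro ballI)
    fix d assume "d \<in> B"
    then consider "prefix d e" | "prefix e d" using branch_strict_prefix_cases[OF br e(1)] by blast
    then show "prefix (take (Suc n) e) d \<or> prefix d (take (Suc n) e)"
    proof cases
      case 1
      then show ?thesis using prefix_same_cases take_is_prefix by blast
    qed (use take_is_prefix prefix_order.trans in blast)
  qed
  ultimately show ?case by (intro bexI[of _ "take (Suc n) e"]) auto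
qed

lemma is_branch_strict_prefixE:
  fixes B :: "'a list set"
  assumes br: "is_branch UNIV strict_prefix B"
  obtains b where "B = range (\<lambda>n. map b [0..<n])"
proof
  have same_length: "a = a'" if "a \<in> B" "a' \<in> B" "length a = length a'" for a a'
    using branch_strict_prefix_cases[OF br that(1,2)] that(3) by (auto simp: prefix_def)
  define el where "el n = (SOME x. x \<in> B \<and> length x = n)" for n
  have el: "el n \<in> B" "length (el n) = n" for n
    using someI_ex[OF branch_strict_prefix_lengths[OF br, of n, unfolded Bex_def]]
    unfolding el_def by blast+
  have el_prefix: "prefix (el m) (el n)" if "m \<le> n" for m n
    using branch_strict_prefix_cases[OF br el(1) el(1), of m n]
  proof
    assume "prefix (el n) (el m)"
    then have "n \<le> m" using prefix_length_le[of "el n" "el m"] by (simp add: el(2))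
    then show ?thesis using that by simp
  qed
  define b where "b i = el (Suc i) ! i" for i
  have map_b: "map b [0..<n] = el n" for n
  proof (rule nth_equalityI)
    fix i assume "i < length (map b [0..<n])"
    then have "Suc i \<le> n" by simp
    then show "map b [0..<n] ! i = el n ! i"
      using el_prefix[of "Suc i" n] el(2)[of "Suc i"]
      by (auto simp: b_def prefix_def nth_append)
  qed (simp add: el)
  have "x \<in> range el" if "x \<in> B" for x
    using same_length[OF that el(1)] el(2) by (metis rangeI)
  then show "B = range (\<lambda>n. map b [0..<n])"
    using el(1) by (auto simp: map_b)
qed

lemma shoot_strict_prefix:
  "shoot UNIV strict_prefix l x = {(\<Union>j\<in>J. l (x @ [j])) | J. finite (- J)}"
proof -
  have inj: "inj (\<lambda>j. x @ [j])" by (simp add: inj_def)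
  have "C \<subseteq> range (\<lambda>j. x @ [j]) \<and> finite (range (\<lambda>j. x @ [j]) - C) \<longleftrightarrow>
        (\<exists>J. C = (\<lambda>j. x @ [j]) ` J \<and> finite (- J))" for C
  proof
    assume C: "C \<subseteq> range (\<lambda>j. x @ [j]) \<and> finite (range (\<lambda>j. x @ [j]) - C)"
    define J where "J = {j. x @ [j] \<in> C}"
    have "C = (\<lambda>j. x @ [j]) ` J" using C by (auto simp: J_def)
    moreover have "range (\<lambda>j. x @ [j]) - C = (\<lambda>j. x @ [j]) ` (- J)" by (auto simp: J_def)
    then have "finite (- J)" using C finite_imageD[of "\<lambda>j. x @ [j]"] inj
      by (metis inj_on_subset subset_UNIV)
    ultimately show "\<exists>J. C = (\<lambda>j. x @ [j]) ` J \<and> finite (- J)" by blast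
  next
    assume "\<exists>J. C = (\<lambda>j. x @ [j]) ` J \<and> finite (- J)"
    then obtain J where "C = (\<lambda>j. x @ [j]) ` J" "finite (- J)" by blast
    moreover have "range (\<lambda>j. x @ [j]) - (\<lambda>j. x @ [j]) ` J = (\<lambda>j. x @ [j]) ` (- J)"
      using inj by (auto simp: inj_def)
    ultimately show "C \<subseteq> range (\<lambda>j. x @ [j]) \<and> finite (range (\<lambda>j. x @ [j]) - C)" by auto
  qed
  then have "shoot UNIV strict_prefix l x =
      {\<Union> (l ` C) | C. \<exists>J. C = (\<lambda>j. x @ [j]) ` J \<and> finite (- J)}"
    unfolding shoot_def sons_strict_prefix by simp
  then show ?thesis by (auto simp: image_image; metis image_image)
qed

lemma baire_foliage_tree_strict_prefix:
  fixes l :: "nat list \<Rightarrow> 'b::topological_space set"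
  assumes open_leaf: "\<And>x. openin (top_of_set X) (l x)"
    and root: "l [] = X"
    and cover: "\<And>x. l x = (\<Union>j. l (x @ [j]))"
    and disjoint: "\<And>x. disjoint_family (\<lambda>j. l (x @ [j]))"
    and fruit: "\<And>b. \<exists>p. (\<Inter>n. l (map b [0..<n])) = {p}"
  shows "baire_foliage_tree X UNIV strict_prefix l"
  unfolding baire_foliage_tree_def
proof (intro conjI ballI allI impI)
  fix x :: "nat list"
  show "l x = \<Union> (l ` sons UNIV strict_prefix x)"
    using cover[of x] by (simp add: sons_strict_prefix image_image)
  show "disjoint_family_on l (sons UNIV strict_prefix x)"
    using disjoint[of x] by (auto simp: sons_strict_prefix disjoint_family_on_def)
next
  fix B :: "nat list set"
  assume "is_branch UNIV strict_prefix B"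
  then obtain b where "B = range (\<lambda>n. map b [0..<n])" by (rule is_branch_strict_prefixE)
  then show "\<exists>p. fruit l B = {p}" using fruit[of b] by (simp add: fruit_def image_image)
next
  show "\<exists>r\<in>UNIV. (\<forall>y\<in>UNIV. y \<noteq> r \<longrightarrow> strict_prefix r y) \<and> l r = X"
    using root by (intro bexI[of _ "[]"]) (auto simp: strict_prefix_def)
  show "\<exists>f :: nat list \<Rightarrow> nat list. bij_betw f UNIV UNIV \<and>
      (\<forall>x\<in>UNIV. \<forall>y\<in>UNIV. strict_prefix x y \<longleftrightarrow> strict_prefix (f x) (f y))"
    by (rule exI[of _ "id :: nat list \<Rightarrow> nat list"]) simp
qed (use is_tree_strict_prefix open_leaf in simp_all)
section \<open>Cylinders of the Baire space\<close>

lemma S_leaf_antimono: "prefix a b \<Longrightarrow> S_leaf b \<subseteq> S_leaf a"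
  unfolding S_leaf_def prefix_def by (auto simp: nth_append)

lemma S_leaf_snoc_iff: "p \<in> S_leaf (t @ [n]) \<longleftrightarrow> p \<in> S_leaf t \<and> p (length t) = n"
  by (auto simp: S_leaf_def nth_append less_Suc_eq)

lemma S_leaf_imp_eq_map: "p \<in> S_leaf t \<Longrightarrow> t = map p [0..<length t]"
  by (intro nth_equalityI) (auto simp: S_leaf_def)

lemma prefix_map_upt: "m \<le> n \<Longrightarrow> prefix (map p [0..<m]) (map p [0..<n])"
  using take_is_prefix[of m "map p [0..<n]"] by (simp add: take_map)

lemma prefix_nth: "prefix x z \<Longrightarrow> k < length x \<Longrightarrow> x ! k = z ! k"
  by (auto simp: prefix_def nth_append)

lemma prefix_append_replicate: "k \<le> k' \<Longrightarrow> prefix (x @ replicate k c) (x @ replicate k' c)"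
  by (auto simp: prefix_def le_iff_add replicate_add)

lemma S_leaf_nonempty: "S_leaf t \<noteq> {}"
proof -
  have "(\<lambda>i. if i < length t then t ! i else 0) \<in> S_leaf t" by (simp add: S_leaf_def)
  then show ?thesis by blast
qed

lemma S_leaf_disjoint_iff: "S_leaf a \<inter> S_leaf b = {} \<longleftrightarrow> a \<parallel> b"
proof
  assume disjoint: "S_leaf a \<inter> S_leaf b = {}"
  show "a \<parallel> b"
  proof
    show "\<not> prefix a b" using disjoint S_leaf_antimono[of a b] S_leaf_nonempty[of b] by blast
    show "\<not> prefix b a" using disjoint S_leaf_antimono[of b a] S_leaf_nonempty[of a] by blast
  qed
next
  assume "a \<parallel> b"
  show "S_leaf a \<inter> S_leaf b = {}"
  proof (rule ccontr)
    assume "S_leaf a \<inter> S_leaf b \<noteq> {}"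
    then obtain p where "a = map p [0..<length a]" "b = map p [0..<length b]"
      using S_leaf_imp_eq_map by blast
    then have "prefix a b \<or> prefix b a" using prefix_map_upt nat_le_linear by metis
    with \<open>a \<parallel> b\<close> show False by blast
  qed
qed

lemma snoc_parallel: "n \<noteq> m \<Longrightarrow> t @ [n] \<parallel> t @ [m]"
  by (rule not_equal_is_parallel) simp_all

lemma pairwise_parallel_split:
  assumes "pairwise (\<parallel>) A" and "v \<in> A"
  shows "pairwise (\<parallel>) (A - {v} \<union> range (\<lambda>n. v @ [n]))"
  unfolding pairwise_def
proof (intro ballI impI)
  have from_v: "a \<parallel> v @ [n]" if "a \<in> A - {v}" for a n
    using assms that parallel_append[of a v "[]" "[n]"] by (auto simp: pairwise_def)
  fix a b assume "a \<in> A - {v} \<union> range (\<lambda>n. v @ [n])" "b \<in> A - {v} \<union> range (\<lambda>n. v @ [n])" "a \<noteq> b"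
  then show "a \<parallel> b"
    using assms(1) from_v snoc_parallel by (auto simp: pairwise_def parallel_commute)
qed

lemma open_S_leaf: "open (S_leaf t)"
proof -
  have "S_leaf t = Pi\<^sub>E UNIV (\<lambda>i. if i < length t then {t ! i} else UNIV)"
    by (auto simp: S_leaf_def PiE_def Pi_def extensional_def)
  moreover have "open (Pi\<^sub>E UNIV (\<lambda>i. if i < length t then {t ! i} else (UNIV :: nat set)))"
  proof (rule open_PiE)
    show "finite {i. (if i < length t then {t ! i} else UNIV) \<noteq> (UNIV :: nat set)}"
      by (rule finite_subset[of _ "{..<length t}"]) auto
  qed (simp add: open_discrete)
  ultimately show ?thesis by simp
qed

lemma open_contains_S_leaf:
  assumes "open U" "p \<in> U"
  obtains n where "S_leaf (map p [0..<n]) \<subseteq> U"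
proof -
  from assms have "openin (product_topology (\<lambda>i. euclidean) UNIV) U" by (simp add: open_fun_def)
  from product_topology_open_contains_basis[OF this assms(2)] obtain X where
    X: "p \<in> Pi\<^sub>E UNIV X" "finite {i. X i \<noteq> UNIV}" "Pi\<^sub>E UNIV X \<subseteq> U"
    by auto
  from X(2) obtain n where n: "{i. X i \<noteq> UNIV} \<subseteq> {..<n}" using finite_nat_bounded by force
  have "S_leaf (map p [0..<n]) \<subseteq> Pi\<^sub>E UNIV X"
  proof
    fix q assume q: "q \<in> S_leaf (map p [0..<n])"
    have "q i \<in> X i" for i
    proof (cases "i < n")
      case True
      then show ?thesis using q X(1) by (auto simp: S_leaf_def PiE_def Pi_def)
    next
      case False
      then show ?thesis using n by force
    qed
    then show "q \<in> Pi\<^sub>E UNIV X" by (simp add: PiE_def Pi_def)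
  qed
  with X(3) show thesis using that by blast
qed

lemma prefix_chain_mono:
  assumes "\<And>i. prefix (a i) (a (Suc i))" and "i \<le> j"
  shows "prefix (a i) (a j)"
  using assms(2) by (induction j rule: dec_induct) (auto intro: prefix_order.trans assms(1))

lemma Inter_S_leaf_strict_prefix_chain:
  assumes chain: "\<And>i. strict_prefix (a i) (a (Suc i))"
  obtains q where "(\<Inter>i. S_leaf (a i)) = {q}"
proof
  have mono: "prefix (a i) (a j)" if "i \<le> j" for i j
    using prefix_chain_mono[of a, OF _ that] chain by (simp add: strict_prefix_def)
  have long: "i \<le> length (a i)" for i
  proof (induction i)
    case (Suc i)
    then show ?case using prefix_length_less[OF chain[of i]] by simp
  qed simp
  define q where "q k = a (Suc k) ! k" for k
  have "q \<in> S_leaf (a i)" for i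
    unfolding S_leaf_def
  proof (intro CollectI allI impI)
    fix k assume "k < length (a i)"
    moreover have "k < length (a (Suc k))" using long[of "Suc k"] by simp
    moreover note mono[of "Suc k" "max i (Suc k)"] mono[of i "max i (Suc k)"]
    ultimately show "q k = a i ! k" by (simp add: q_def prefix_nth)
  qed
  moreover have "p = q" if "\<forall>i. p \<in> S_leaf (a i)" for p
  proof
    fix k
    have "p \<in> S_leaf (a (Suc k))" using that by blast
    then show "p k = q k" using long[of "Suc k"] by (simp add: S_leaf_def q_def)
  qed
  ultimately show "(\<Inter>i. S_leaf (a i)) = {q}" by blast
qed

section \<open>Stages\<close>

definition schedule :: "nat \<Rightarrow> nat list" where
  "schedule m = from_nat (fst (prod_decode (m div 2)))"

lemma schedule_odd_often: "\<exists>m\<ge>M. odd m \<and> schedule m = t"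
proof -
  define k where "k = prod_encode (to_nat t, M)"
  have "M \<le> k" unfolding k_def by (rule le_prod_encode_2)
  moreover have "schedule (2 * k + 1) = t" by (simp add: schedule_def k_def)
  ultimately show ?thesis by (intro exI[of _ "2 * k + 1"]) auto
qed

datatype stage = Stage (trunk: "nat list") (junk: "nat list set") (depth: nat)

definition pieces :: "stage \<Rightarrow> nat list set" where
  "pieces s = insert (trunk s) (junk s)"

definition region :: "stage \<Rightarrow> (nat \<Rightarrow> nat) set" where
  "region s = (\<Union>t\<in>pieces s. S_leaf t)"

text \<open>Junk is split only at odd depths, so at even depths the trunk is always active.\<close>

definition junk_turn :: "stage \<Rightarrow> bool" where
  "junk_turn s \<longleftrightarrow> odd (depth s) \<and> schedule (depth s) \<in> junk s"

definition active_piece :: "stage \<Rightarrow> nat list" where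
  "active_piece s = (if junk_turn s then schedule (depth s) else trunk s)"

lemma active_piece_in_pieces: "active_piece s \<in> pieces s"
  by (simp add: active_piece_def junk_turn_def pieces_def)

lemma active_piece_scheduled:
  "odd (depth s) \<Longrightarrow> schedule (depth s) \<in> pieces s \<Longrightarrow> active_piece s = schedule (depth s)"
  by (auto simp: active_piece_def junk_turn_def pieces_def)

lemma junk_turn_if_active_junk:
  "trunk s \<notin> junk s \<Longrightarrow> active_piece s \<in> junk s \<Longrightarrow> junk_turn s"
  by (auto simp: active_piece_def split: if_splits)

locale pi_dense_Gdelta =
  fixes U :: "nat \<Rightarrow> (nat \<Rightarrow> nat) set"
  assumes open_U: "\<And>n. open (U n)" and pi_dense_U: "\<And>n. pi_dense (U n)"
begin

section \<open>Ranks and good digits\<close>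

definition Y :: "(nat \<Rightarrow> nat) set" where
  "Y = (\<Inter>n. U n)"

definition rank :: "nat list \<Rightarrow> enat" where
  "rank t = (if \<exists>k. \<not> S_leaf t \<subseteq> U k then enat (LEAST k. \<not> S_leaf t \<subseteq> U k) else \<infinity>)"

lemma rank_mono:
  assumes "prefix a b"
  shows "rank a \<le> rank b"
proof (cases "\<exists>k. \<not> S_leaf b \<subseteq> U k")
  case True
  define K where "K = (LEAST k. \<not> S_leaf b \<subseteq> U k)"
  have "\<not> S_leaf b \<subseteq> U K" unfolding K_def using True by (rule LeastI_ex)
  then have "\<not> S_leaf a \<subseteq> U K" using S_leaf_antimono[OF assms] by blast
  then have "(LEAST k. \<not> S_leaf a \<subseteq> U k) \<le> K" by (rule Least_le)
  then show ?thesis using True \<open>\<not> S_leaf a \<subseteq> U K\<close> unfolding rank_def K_def by auto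
qed (simp add: rank_def)

lemma less_rank_imp_subset: "enat K < rank t \<Longrightarrow> S_leaf t \<subseteq> U K"
  by (auto simp: rank_def split: if_splits dest: not_less_Least)

lemma rank_eq_imp_not_subset:
  assumes "rank t = enat K"
  shows "\<not> S_leaf t \<subseteq> U K"
proof -
  have ex: "\<exists>k. \<not> S_leaf t \<subseteq> U k" using assms by (auto simp: rank_def split: if_splits)
  then have "K = (LEAST k. \<not> S_leaf t \<subseteq> U k)" using assms by (simp add: rank_def)
  then show ?thesis using LeastI_ex[OF ex] by simp
qed

lemma enat_less_rank_iff: "enat K < rank t \<longleftrightarrow> (\<forall>i\<le>K. S_leaf t \<subseteq> U i)"
proof
  assume "enat K < rank t"
  then show "\<forall>i\<le>K. S_leaf t \<subseteq> U i"
    using less_rank_imp_subset le_less_trans by (metis enat_ord_simps(1))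
next
  assume below: "\<forall>i\<le>K. S_leaf t \<subseteq> U i"
  show "enat K < rank t"
  proof (cases "rank t")
    case (enat K')
    then show ?thesis using below rank_eq_imp_not_subset by (metis enat_ord_simps(2) not_le)
  qed simp
qed

definition good :: "nat list \<Rightarrow> nat set" where
  "good w = {g. rank w = \<infinity> \<or> rank w < rank (w @ [g])}"

lemma infinite_good: "infinite (good w)"
proof (cases "rank w")
  case (enat K)
  have "n \<in> good w" if "S_leaf (w @ [n]) \<subseteq> U K" for n
  proof -
    have "S_leaf (w @ [n]) \<subseteq> U i" if "i < K" for i
      using less_rank_imp_subset[of i w] that enat S_leaf_antimono[of w "w @ [n]"] by auto
    with \<open>S_leaf (w @ [n]) \<subseteq> U K\<close> have "enat K < rank (w @ [n])"
      by (auto simp: enat_less_rank_iff le_less)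
    then show ?thesis using enat by (simp add: good_def)
  qed
  then have "{n. S_leaf (w @ [n]) \<subseteq> U K} \<subseteq> good w" by blast
  moreover have "infinite {n. S_leaf (w @ [n]) \<subseteq> U K}"
    using pi_dense_U[of K] by (simp add: pi_dense_def)
  ultimately show ?thesis using finite_subset by blast
qed (simp add: good_def)

lemma not_good_rank:
  assumes "g \<notin> good w"
  shows "rank w \<noteq> \<infinity>" and "rank (w @ [g]) = rank w"
proof -
  show "rank w \<noteq> \<infinity>" using assms by (simp add: good_def)
  have "rank w \<le> rank (w @ [g])" by (rule rank_mono) simp
  then show "rank (w @ [g]) = rank w" using assms unfolding good_def by (simp add: not_less)
qed

definition good_digit :: "nat list \<Rightarrow> nat \<Rightarrow> nat" where
  "good_digit w = enumerate (good w)"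

lemma good_digit_in_good: "good_digit w j \<in> good w"
  unfolding good_digit_def by (rule enumerate_in_set[OF infinite_good])

lemma inj_good_digit: "inj (good_digit w)"
  unfolding good_digit_def by (rule inj_enumerate[OF infinite_good])

lemma range_good_digit: "range (good_digit w) = good w"
  unfolding good_digit_def by (rule range_enumerate[OF infinite_good])

definition climbs :: "nat list \<Rightarrow> nat list \<Rightarrow> bool" where
  "climbs a b \<longleftrightarrow> strict_prefix a b \<and> (rank b = \<infinity> \<or> rank a < rank b)"

lemma climbs_good: "g \<in> good w \<Longrightarrow> climbs w (w @ [g])"
  using rank_mono[of w "w @ [g]"] by (auto simp: climbs_def good_def strict_prefix_def)

lemma climbs_prefix_right: "climbs a b \<Longrightarrow> prefix b b' \<Longrightarrow> climbs a b'"
  using rank_mono[of b b'] prefix_order.less_le_trans[of a b b']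
  by (auto simp: climbs_def top.extremum_unique[where 'a=enat, unfolded top_enat_def])

lemma climbs_prefix_left: "prefix a' a \<Longrightarrow> climbs a b \<Longrightarrow> climbs a' b"
  using rank_mono[of a' a] prefix_order.le_less_trans[of a' a b]
  by (auto simp: climbs_def)

lemma climbing_sequence_converges:
  assumes climbing: "\<And>i. climbs (a i) (a (Suc i))"
  obtains q where "q \<in> Y" "(\<Inter>i. S_leaf (a i)) = {q}"
proof -
  have "strict_prefix (a i) (a (Suc i))" for i using climbing by (simp add: climbs_def)
  then obtain q where q: "(\<Inter>i. S_leaf (a i)) = {q}" by (rule Inter_S_leaf_strict_prefix_chain)
  have rank_a: "enat i \<le> rank (a i)" for i
  proof (induction i)
    case (Suc i)
    then show ?case
      using climbing[of i] by (auto simp: climbs_def Suc_ile_eq dest: order.strict_trans1)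
  qed (simp add: zero_enat_def[symmetric])
  have "q \<in> U K" for K
  proof -
    have "enat K < rank (a (Suc K))" using rank_a[of "Suc K"] by (simp add: Suc_ile_eq)
    then show ?thesis using less_rank_imp_subset q by blast
  qed
  then have "q \<in> Y" by (simp add: Y_def)
  with q show thesis using that by blast
qed

section \<open>The stage at each node\<close>

text \<open>At a trunk turn the active piece is the trunk, which is never junk, so removing it from
  the junk of child 0 is vacuous there.\<close>

definition child :: "stage \<Rightarrow> nat \<Rightarrow> stage" where
  "child s j = (let v = active_piece s in case j of
      0 \<Rightarrow> Stage (if junk_turn s then trunk s else v @ [good_digit v 0])
             (junk s - {v} \<union> {v @ [n] |n. n \<notin> good v}) (Suc (depth s))
    | Suc i \<Rightarrow> Stage (v @ [good_digit v (if junk_turn s then i else Suc i)]) {} (Suc (depth s)))"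

lemma depth_child [simp]: "depth (child s j) = Suc (depth s)"
  by (simp add: child_def Let_def split: nat.split)

lemma trunk_child_0:
  "trunk (child s 0) = (if junk_turn s then trunk s else trunk s @ [good_digit (trunk s) 0])"
  by (simp add: child_def Let_def active_piece_def)

lemma junk_child_0:
  "junk (child s 0) = junk s - {active_piece s} \<union> {active_piece s @ [n] |n. n \<notin> good (active_piece s)}"
  by (simp add: child_def Let_def)

lemma child_Suc:
  "child s (Suc i) = Stage (active_piece s @ [good_digit (active_piece s) (if junk_turn s then i else Suc i)])
     {} (Suc (depth s))"
  by (simp add: child_def Let_def)

definition wf_stage :: "stage \<Rightarrow> bool" where
  "wf_stage s \<longleftrightarrow> trunk s \<notin> junk s \<and> pairwise (\<parallel>) (pieces s) \<and> (\<forall>t\<in>junk s. rank t \<noteq> \<infinity>)"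

lemma wf_stage_disjoint:
  "wf_stage s \<Longrightarrow> a \<in> pieces s \<Longrightarrow> b \<in> pieces s \<Longrightarrow> a \<noteq> b \<Longrightarrow> S_leaf a \<inter> S_leaf b = {}"
  by (simp add: wf_stage_def pairwise_def S_leaf_disjoint_iff)

lemma pieces_child_subset:
  assumes "wf_stage s"
  shows "pieces (child s j) \<subseteq> pieces s - {active_piece s} \<union> range (\<lambda>n. active_piece s @ [n])"
proof (cases j)
  case 0
  have "trunk (child s 0) \<in> pieces s - {active_piece s} \<union> range (\<lambda>n. active_piece s @ [n])"
  proof (cases "junk_turn s")
    case True
    then have "trunk s \<noteq> active_piece s"
      using assms by (auto simp: wf_stage_def active_piece_def junk_turn_def)
    then show ?thesis using True by (simp add: trunk_child_0 pieces_def)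
  qed (simp add: trunk_child_0 active_piece_def)
  moreover have "junk (child s 0) \<subseteq> pieces s - {active_piece s} \<union> range (\<lambda>n. active_piece s @ [n])"
    by (auto simp: junk_child_0 pieces_def)
  ultimately show ?thesis using 0 by (simp add: pieces_def)
qed (simp add: pieces_def child_Suc)

lemma pieces_child_extend:
  assumes "wf_stage s" "a \<in> pieces (child s j)"
  shows "\<exists>a'\<in>pieces s. prefix a' a"
proof -
  have "a \<in> pieces s \<or> (\<exists>n. a = active_piece s @ [n])"
    using pieces_child_subset[OF assms(1)] assms(2) by blast
  then show ?thesis using active_piece_in_pieces[of s] by auto
qed

lemma active_extension_not_piece:
  assumes "wf_stage s"
  shows "active_piece s @ [n] \<notin> pieces s"
proof
  assume "active_piece s @ [n] \<in> pieces s"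
  then have "active_piece s \<parallel> active_piece s @ [n]"
    using assms active_piece_in_pieces[of s] by (auto simp: wf_stage_def pairwise_def)
  then show False by (auto simp: parallel_def)
qed

lemma pieces_child_disjoint:
  assumes wf: "wf_stage s" and "j \<noteq> j'"
  shows "pieces (child s j) \<inter> pieces (child s j') = {}"
proof -
  let ?v = "active_piece s"
  let ?g = "\<lambda>i. good_digit ?v (if junk_turn s then i else Suc i)"
  have "?v @ [?g i] \<notin> pieces (child s 0)" for i
  proof -
    have "?g i \<in> good ?v" by (rule good_digit_in_good)
    moreover have "?g i \<noteq> good_digit ?v 0" if "\<not> junk_turn s"
      using that inj_good_digit[of ?v] by (auto dest: injD)
    ultimately show ?thesis
      using active_extension_not_piece[OF wf, of "?g i"] pieces_child_subset[OF wf, of 0]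
      by (auto simp: pieces_def trunk_child_0 junk_child_0 active_piece_def)
  qed
  moreover have "?g i \<noteq> ?g i'" if "i \<noteq> i'" for i i'
    using that inj_good_digit[of ?v] by (auto dest: injD)
  ultimately show ?thesis
    using \<open>j \<noteq> j'\<close> by (cases j; cases j') (auto simp: child_Suc pieces_def)
qed

lemma passive_piece_survives:
  "a \<in> pieces s \<Longrightarrow> a \<noteq> active_piece s \<Longrightarrow> a \<in> pieces (child s 0)"
  by (auto simp: pieces_def trunk_child_0 junk_child_0 active_piece_def split: if_splits)

lemma passive_junk_survives:
  "a \<in> junk s \<Longrightarrow> a \<noteq> active_piece s \<Longrightarrow> a \<in> junk (child s 0)"
  by (simp add: junk_child_0)

lemma active_extension_in_child: "\<exists>j. active_piece s @ [n] \<in> pieces (child s j)"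
proof (cases "n \<in> good (active_piece s)")
  case True
  then obtain i where i: "n = good_digit (active_piece s) i" using range_good_digit by blast
  show ?thesis
  proof (cases "junk_turn s")
    case True
    then show ?thesis using i by (intro exI[of _ "Suc i"]) (simp add: child_Suc pieces_def)
  next
    case False
    show ?thesis
    proof (cases i)
      case 0
      then show ?thesis using False i
        by (intro exI[of _ 0]) (simp add: pieces_def trunk_child_0 active_piece_def)
    next
      case (Suc i')
      then show ?thesis using False i by (intro exI[of _ i]) (simp add: child_Suc pieces_def)
    qed
  qed
qed (auto simp: pieces_def junk_child_0 intro: exI[of _ 0])

lemma wf_stage_child:
  assumes wf: "wf_stage s"
  shows "wf_stage (child s j)"
proof (cases j)
  case 0
  have "pairwise (\<parallel>) (pieces s - {active_piece s} \<union> range (\<lambda>n. active_piece s @ [n]))"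
    using pairwise_parallel_split[OF _ active_piece_in_pieces] wf by (simp add: wf_stage_def)
  then have "pairwise (\<parallel>) (pieces (child s 0))"
    using pairwise_subset pieces_child_subset[OF wf] by blast
  moreover have "trunk (child s 0) \<notin> junk (child s 0)"
  proof (cases "junk_turn s")
    case True
    have "trunk s \<noteq> active_piece s @ [n]" for n
      using active_extension_not_piece[OF wf, of n] by (auto simp: pieces_def)
    moreover have "trunk s \<notin> junk s" using wf by (simp add: wf_stage_def)
    ultimately show ?thesis using True by (simp add: trunk_child_0 junk_child_0)
  next
    case False
    have "trunk s @ [good_digit (trunk s) 0] \<notin> junk s"
      using active_extension_not_piece[OF wf] False by (simp add: pieces_def active_piece_def)
    then show ?thesis using False good_digit_in_good[of "trunk s" 0]
      by (simp add: trunk_child_0 junk_child_0 active_piece_def)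
  qed
  moreover have "\<forall>t\<in>junk (child s 0). rank t \<noteq> \<infinity>"
    using wf not_good_rank by (auto simp: wf_stage_def junk_child_0)
  ultimately show ?thesis using 0 by (simp add: wf_stage_def)
qed (simp add: wf_stage_def child_Suc pieces_def)

lemma region_child_subset:
  assumes "wf_stage s"
  shows "region (child s j) \<subseteq> region s"
proof
  fix p assume "p \<in> region (child s j)"
  then obtain a where "a \<in> pieces (child s j)" "p \<in> S_leaf a" by (auto simp: region_def)
  moreover obtain a' where "a' \<in> pieces s" "prefix a' a"
    using pieces_child_extend[OF assms \<open>a \<in> pieces (child s j)\<close>] by blast
  ultimately show "p \<in> region s" using S_leaf_antimono by (auto simp: region_def)
qed

lemma region_eq_UN_child:
  assumes "wf_stage s"
  shows "region s = (\<Union>j. region (child s j))"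
proof
  show "region s \<subseteq> (\<Union>j. region (child s j))"
  proof
    fix p assume "p \<in> region s"
    then obtain a where a: "a \<in> pieces s" "p \<in> S_leaf a" by (auto simp: region_def)
    show "p \<in> (\<Union>j. region (child s j))"
    proof (cases "a = active_piece s")
      case True
      obtain j where "a @ [p (length a)] \<in> pieces (child s j)"
        using active_extension_in_child True by blast
      moreover have "p \<in> S_leaf (a @ [p (length a)])" using a(2) by (simp add: S_leaf_snoc_iff)
      ultimately show ?thesis by (auto simp: region_def)
    next
      case False
      then have "a \<in> pieces (child s 0)" using a(1) by (rule passive_piece_survives[rotated])
      then show ?thesis using a(2) by (auto simp: region_def)
    qed
  qed
qed (use region_child_subset[OF assms] in blast)

lemma region_child_disjoint:
  assumes wf: "wf_stage s" and "j \<noteq> j'"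
  shows "region (child s j) \<inter> region (child s j') = {}"
proof (rule ccontr)
  let ?P = "pieces s - {active_piece s} \<union> range (\<lambda>n. active_piece s @ [n])"
  assume "region (child s j) \<inter> region (child s j') \<noteq> {}"
  then obtain p a b where ab: "a \<in> pieces (child s j)" "b \<in> pieces (child s j')"
    and p: "p \<in> S_leaf a" "p \<in> S_leaf b"
    by (auto simp: region_def)
  have "a \<noteq> b" using ab pieces_child_disjoint[OF assms] by blast
  moreover have "a \<in> ?P" "b \<in> ?P" using ab pieces_child_subset[OF wf] by blast+
  moreover have "pairwise (\<parallel>) ?P"
    using pairwise_parallel_split[OF _ active_piece_in_pieces] wf by (simp add: wf_stage_def)
  ultimately have "S_leaf a \<inter> S_leaf b = {}" by (simp add: pairwise_def S_leaf_disjoint_iff)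
  with p show False by blast
qed

definition stage_at :: "nat list \<Rightarrow> stage" where
  "stage_at x = foldl child (Stage [] {} 0) x"

lemma stage_at_Nil: "stage_at [] = Stage [] {} 0"
  by (simp add: stage_at_def)

lemma stage_at_snoc [simp]: "stage_at (x @ [j]) = child (stage_at x) j"
  by (simp add: stage_at_def)

lemma stage_at_replicate_Suc: "stage_at (x @ replicate (Suc k) 0) = child (stage_at (x @ replicate k 0)) 0"
  using stage_at_snoc[of "x @ replicate k 0" 0] by (simp add: replicate_append_same)

lemma depth_stage_at: "depth (stage_at x) = length x"
  by (induction x rule: rev_induct) (simp_all add: stage_at_Nil)

lemma wf_stage_at: "wf_stage (stage_at x)"
  by (induction x rule: rev_induct) (simp add: stage_at_Nil wf_stage_def pieces_def, simp add: wf_stage_child)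

lemma region_stage_at_antimono:
  assumes "prefix x x'"
  shows "region (stage_at x') \<subseteq> region (stage_at x)"
proof -
  have "region (stage_at (x @ z)) \<subseteq> region (stage_at x)" for z
  proof (induction z rule: rev_induct)
    case (snoc j z)
    have "stage_at (x @ z @ [j]) = child (stage_at (x @ z)) j"
      using stage_at_snoc[of "x @ z" j] by simp
    then show ?case using snoc region_child_subset[OF wf_stage_at, of "x @ z" j] by simp
  qed simp
  then show ?thesis using assms by (auto simp: prefix_def)
qed

lemma eventually_active:
  assumes survives: "\<And>s a. a \<in> P s \<Longrightarrow> a \<noteq> active_piece s \<Longrightarrow> a \<in> P (child s 0)"
    and P_pieces: "\<And>s. P s \<subseteq> pieces s"
    and a: "a \<in> P (stage_at x)"
  obtains k where "a \<in> P (stage_at (x @ replicate k 0))" "active_piece (stage_at (x @ replicate k 0)) = a"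
proof -
  obtain m where m: "length x \<le> m" "odd m" "schedule m = a" using schedule_odd_often by blast
  have "\<exists>k. a \<in> P (stage_at (x' @ replicate k 0)) \<and> active_piece (stage_at (x' @ replicate k 0)) = a"
    if "length x' + d = m" "a \<in> P (stage_at x')" for d x'
    using that
  proof (induction d arbitrary: x')
    case 0
    then have "active_piece (stage_at x') = a"
      using active_piece_scheduled[of "stage_at x'"] m P_pieces by (auto simp: depth_stage_at)
    then show ?case using 0 by (intro exI[of _ 0]) simp
  next
    case (Suc d)
    show ?case
    proof (cases "active_piece (stage_at x') = a")
      case False
      then have "a \<in> P (stage_at (x' @ [0]))" using survives Suc.prems by simp
      then obtain k where "a \<in> P (stage_at ((x' @ [0]) @ replicate k 0))"
        "active_piece (stage_at ((x' @ [0]) @ replicate k 0)) = a"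
        using Suc.IH[of "x' @ [0]"] Suc.prems by auto
      then show ?thesis by (intro exI[of _ "Suc k"]) simp
    qed (use Suc.prems in \<open>intro exI[of _ 0], simp\<close>)
  qed
  then show thesis using that a m(1) le_add_diff_inverse by blast
qed

lemma initial_segment_eventually_active:
  "\<exists>x. map p [0..<n] \<in> pieces (stage_at x) \<and> active_piece (stage_at x) = map p [0..<n]"
proof (induction n)
  case 0
  show ?case
    by (intro exI[of _ "[]"]) (simp add: stage_at_Nil pieces_def active_piece_def junk_turn_def)
next
  case (Suc n)
  then obtain x where "active_piece (stage_at x) = map p [0..<n]" by blast
  then obtain j where "map p [0..<Suc n] \<in> pieces (stage_at (x @ [j]))"
    using active_extension_in_child[of "stage_at x" "p n"] by auto
  then obtain k where "map p [0..<Suc n] \<in> pieces (stage_at ((x @ [j]) @ replicate k 0))"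
    "active_piece (stage_at ((x @ [j]) @ replicate k 0)) = map p [0..<Suc n]"
    using eventually_active[where P = pieces] passive_piece_survives by blast
  then show ?case by blast
qed

section \<open>Fruits of branches\<close>

lemma pieces_stage_at_extend:
  "a \<in> pieces (stage_at (x @ z)) \<Longrightarrow> \<exists>a'\<in>pieces (stage_at x). prefix a' a"
proof (induction z arbitrary: a rule: rev_induct)
  case (snoc j z)
  then have "a \<in> pieces (child (stage_at (x @ z)) j)"
    using stage_at_snoc[of "x @ z" j] by simp
  then obtain a'' where "a'' \<in> pieces (stage_at (x @ z))" "prefix a'' a"
    using pieces_child_extend[OF wf_stage_at] by blast
  then show ?case using snoc.IH prefix_order.trans by blast
qed auto

lemma trunk_reset:
  assumes "junk (stage_at x) = {}"
  shows "junk (stage_at (x @ z @ [Suc i])) = {}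
    \<and> climbs (trunk (stage_at x)) (trunk (stage_at (x @ z @ [Suc i])))"
proof -
  let ?s = "stage_at (x @ z)"
  let ?g = "good_digit (active_piece ?s) (if junk_turn ?s then i else Suc i)"
  have eq: "stage_at (x @ z @ [Suc i]) = Stage (active_piece ?s @ [?g]) {} (Suc (depth ?s))"
    using stage_at_snoc[of "x @ z" "Suc i"] by (simp add: child_Suc)
  have "prefix (trunk (stage_at x)) (active_piece ?s)"
    using pieces_stage_at_extend[OF active_piece_in_pieces[of ?s]] assms by (simp add: pieces_def)
  moreover have "climbs (active_piece ?s) (active_piece ?s @ [?g])"
    by (rule climbs_good[OF good_digit_in_good])
  ultimately show ?thesis using eq climbs_prefix_left by simp
qed

lemma branch_trunk_reset:
  assumes "\<forall>N. \<exists>k\<ge>N. b k \<noteq> 0" and "junk (stage_at (map b [0..<n])) = {}"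
  shows "\<exists>n'>n. junk (stage_at (map b [0..<n'])) = {} \<and>
    climbs (trunk (stage_at (map b [0..<n]))) (trunk (stage_at (map b [0..<n'])))"
proof -
  obtain k where k: "n \<le> k" "b k \<noteq> 0" using assms(1) by blast
  then obtain i where "b k = Suc i" using not0_implies_Suc by blast
  moreover have "map b [0..<Suc k] = map b [0..<n] @ map b [n..<k] @ [b k]"
    using upt_add_eq_append[of 0 n "k - n"] k(1) by simp
  ultimately show ?thesis
    using trunk_reset[OF assms(2), of "map b [n..<k]" i] k(1) by (intro exI[of _ "Suc k"]) simp
qed

lemma fruit_infinitely_nonzero:
  assumes nonzero: "\<forall>N. \<exists>k\<ge>N. b k \<noteq> 0"
  shows "\<exists>q. Y \<inter> (\<Inter>n. region (stage_at (map b [0..<n]))) = {q}"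
proof -
  let ?s = "\<lambda>n. stage_at (map b [0..<n])"
  have "\<exists>n'. junk (?s n) = {} \<longrightarrow> n < n' \<and> junk (?s n') = {} \<and> climbs (trunk (?s n)) (trunk (?s n'))"
    for n
    using branch_trunk_reset[OF nonzero] by blast
  then obtain f where f: "\<And>n. junk (?s n) = {} \<Longrightarrow>
      n < f n \<and> junk (?s (f n)) = {} \<and> climbs (trunk (?s n)) (trunk (?s (f n)))"
    using choice[of "\<lambda>n n'. junk (?s n) = {} \<longrightarrow>
      n < n' \<and> junk (?s n') = {} \<and> climbs (trunk (?s n)) (trunk (?s n'))"] by blast
  define r where "r i = (f ^^ i) 0" for i
  have r_junk: "junk (?s (r i)) = {}" for i
  proof (induction i)
    case (Suc i)
    then show ?case using f[OF Suc] by (simp add: r_def)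
  qed (simp add: r_def stage_at_Nil)
  have r_ge: "i \<le> r i" for i
  proof (induction i)
    case (Suc i)
    then show ?case using f[OF r_junk[of i]] by (simp add: r_def)
  qed simp
  have "climbs (trunk (?s (r i))) (trunk (?s (r (Suc i))))" for i
    using f[OF r_junk[of i]] by (simp add: r_def)
  then obtain q where q: "q \<in> Y" "(\<Inter>i. S_leaf (trunk (?s (r i)))) = {q}"
    by (rule climbing_sequence_converges)
  have region_r: "region (?s (r i)) = S_leaf (trunk (?s (r i)))" for i
    using r_junk by (simp add: region_def pieces_def)
  have "q \<in> region (?s n)" for n
  proof -
    have "q \<in> region (?s (r n))" using q(2) region_r by blast
    then show ?thesis using region_stage_at_antimono[OF prefix_map_upt[OF r_ge[of n]]] by blast
  qed
  moreover have "p = q" if "\<forall>n. p \<in> region (?s n)" for p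
  proof -
    have "p \<in> (\<Inter>i. S_leaf (trunk (?s (r i))))" using that region_r by blast
    then show ?thesis using q(2) by simp
  qed
  ultimately have "Y \<inter> (\<Inter>n. region (?s n)) = {q}" using q(1) by auto
  then show ?thesis by blast
qed

lemma junk_refines_along_point:
  assumes t: "t \<in> junk (stage_at x)" "p \<in> S_leaf t"
    and stays: "\<And>k. p \<in> region (stage_at (x @ replicate k 0))"
  obtains k t' where "t' \<in> junk (stage_at (x @ replicate k 0))" "strict_prefix t t'"
    "p \<in> S_leaf t'" "rank t' = rank t"
proof -
  obtain k where k: "t \<in> junk (stage_at (x @ replicate k 0))"
    "active_piece (stage_at (x @ replicate k 0)) = t"
    using eventually_active[where P = junk] passive_junk_survives t(1) by (auto simp: pieces_def)
  define s where "s = stage_at (x @ replicate k 0)"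
  have wf: "wf_stage s" by (simp add: s_def wf_stage_at)
  have turn: "junk_turn s"
    using junk_turn_if_active_junk wf k by (simp add: s_def wf_stage_def)
  have "p \<in> region (child s 0)" using stays[of "Suc k"] unfolding stage_at_replicate_Suc s_def .
  then obtain a where a: "a \<in> pieces (child s 0)" "p \<in> S_leaf a" by (auto simp: region_def)
  have "a \<notin> pieces s - {t}"
  proof
    assume "a \<in> pieces s - {t}"
    then have "S_leaf a \<inter> S_leaf t = {}"
      using wf_stage_disjoint[OF wf] k(1) by (auto simp: s_def pieces_def)
    with a(2) t(2) show False by blast
  qed
  then obtain n where n: "a = t @ [n]" using pieces_child_subset[OF wf, of 0] a(1) k(2) s_def by blast
  have "a \<noteq> trunk s" using active_extension_not_piece[OF wf] k(2) n by (auto simp: s_def pieces_def)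
  then have "a \<in> junk (child s 0)" using a(1) turn by (simp add: pieces_def trunk_child_0)
  moreover have "a \<notin> junk s" using active_extension_not_piece[OF wf] k(2) n by (auto simp: s_def pieces_def)
  ultimately have "n \<notin> good t" using k(2) n by (auto simp: s_def junk_child_0)
  then have "rank a = rank t" using not_good_rank n by simp
  moreover have "a \<in> junk (stage_at (x @ replicate (Suc k) 0))"
    using \<open>a \<in> junk (child s 0)\<close> unfolding stage_at_replicate_Suc s_def .
  ultimately show thesis using a(2) n by (intro that[of a "Suc k"]) (simp_all add: strict_prefix_def)
qed

lemma junk_refinement_chain:
  assumes t: "t \<in> junk (stage_at x)" "p \<in> S_leaf t"
    and stays: "\<And>k. p \<in> region (stage_at (x @ replicate k 0))"
  shows "\<exists>k t'. t' \<in> junk (stage_at (x @ replicate k 0)) \<and> L \<le> length t' \<and> p \<in> S_leaf t' \<and> rank t' = rank t"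
proof (induction L)
  case 0
  show ?case using t by (intro exI[of _ 0] exI[of _ t]) simp
next
  case (Suc L)
  then obtain k t' where t': "t' \<in> junk (stage_at (x @ replicate k 0))" "L \<le> length t'"
    "p \<in> S_leaf t'" "rank t' = rank t" by blast
  have "p \<in> region (stage_at ((x @ replicate k 0) @ replicate k' 0))" for k'
    using stays[of "k + k'"] by (simp add: replicate_add)
  then obtain k' t'' where "t'' \<in> junk (stage_at ((x @ replicate k 0) @ replicate k' 0))"
    "strict_prefix t' t''" "p \<in> S_leaf t''" "rank t'' = rank t'"
    using junk_refines_along_point[OF t'(1,3)] by blast
  moreover have "length t' < length t''" using prefix_length_less[OF \<open>strict_prefix t' t''\<close>] .
  ultimately show ?case using t' by (intro exI[of _ "k + k'"] exI[of _ t'']) (simp add: replicate_add)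
qed

lemma Y_point_leaves_junk:
  assumes "p \<in> Y" "t \<in> junk (stage_at x)" "p \<in> S_leaf t"
  obtains k where "p \<notin> region (stage_at (x @ replicate k 0))"
proof (rule ccontr)
  assume "\<not> thesis"
  then have stays: "p \<in> region (stage_at (x @ replicate k 0))" for k using that by blast
  obtain K where K: "rank t = enat K"
    using wf_stage_at[of x] assms(2) by (auto simp: wf_stage_def)
  have "p \<in> U K" using assms(1) by (simp add: Y_def)
  then obtain L where L: "S_leaf (map p [0..<L]) \<subseteq> U K" by (rule open_contains_S_leaf[OF open_U])
  obtain t' where t': "L \<le> length t'" "p \<in> S_leaf t'" "rank t' = enat K"
    using junk_refinement_chain[OF assms(2,3) stays, of L] K by auto
  have "prefix (map p [0..<L]) t'"
    using S_leaf_imp_eq_map[OF t'(2)] prefix_map_upt[OF t'(1), of p] by simp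
  then have "S_leaf t' \<subseteq> U K" using L S_leaf_antimono by blast
  with rank_eq_imp_not_subset[OF t'(3)] show False ..
qed

lemma fruit_zero_tail: "\<exists>q. Y \<inter> (\<Inter>k. region (stage_at (x @ replicate k 0))) = {q}"
proof -
  let ?s = "\<lambda>k. stage_at (x @ replicate k 0)"
  \<comment> \<open>even depths, where the trunk is refined by a good digit\<close>
  define a where "a i = trunk (?s (length x + 2 * i))" for i
  have "climbs (a i) (a (Suc i))" for i
  proof -
    define s where "s = ?s (length x + 2 * i)"
    have "\<not> junk_turn s" by (simp add: s_def junk_turn_def depth_stage_at)
    then have "climbs (a i) (trunk (child s 0))"
      using climbs_good[OF good_digit_in_good] by (simp add: a_def s_def trunk_child_0)
    moreover have "prefix (trunk (child s 0)) (trunk (child (child s 0) 0))"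
      by (simp add: trunk_child_0)
    moreover have "?s (length x + 2 * Suc i) = child (child s 0) 0"
      unfolding s_def stage_at_replicate_Suc[symmetric] by (simp add: numeral_2_eq_2)
    ultimately show ?thesis using climbs_prefix_right by (simp add: a_def)
  qed
  then obtain q where q: "q \<in> Y" "(\<Inter>i. S_leaf (a i)) = {q}"
    by (rule climbing_sequence_converges)
  have "q \<in> region (?s k)" for k
  proof -
    have "q \<in> region (?s (length x + 2 * k))" using q(2) by (auto simp: a_def region_def pieces_def)
    moreover have "prefix (x @ replicate k 0) (x @ replicate (length x + 2 * k) 0)"
      by (rule prefix_append_replicate) simp
    ultimately show ?thesis using region_stage_at_antimono by blast
  qed
  moreover have "p = q" if p: "p \<in> Y" "\<forall>k. p \<in> region (?s k)" for p
  proof (rule ccontr)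
    assume "p \<noteq> q"
    then obtain i where "p \<notin> S_leaf (a i)" using q(2) by blast
    moreover have "p \<in> region (?s (length x + 2 * i))" using p(2) by blast
    ultimately obtain t where t: "t \<in> junk (?s (length x + 2 * i))" "p \<in> S_leaf t"
      by (auto simp: region_def pieces_def a_def)
    obtain k where "p \<notin> region (stage_at ((x @ replicate (length x + 2 * i) 0) @ replicate k 0))"
      using Y_point_leaves_junk[OF p(1) t] .
    then show False using p(2) by (simp add: replicate_add[symmetric])
  qed
  ultimately have "Y \<inter> (\<Inter>k. region (?s k)) = {q}" using q(1) by blast
  then show ?thesis by blast
qed

lemma fruit_branch: "\<exists>q. Y \<inter> (\<Inter>n. region (stage_at (map b [0..<n]))) = {q}"
proof (cases "\<exists>N. \<forall>n\<ge>N. b n = 0")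
  case True
  then obtain N where zero: "\<And>n. N \<le> n \<Longrightarrow> b n = 0" by blast
  let ?x = "map b [0..<N]"
  have tail: "map b [0..<N + k] = ?x @ replicate k 0" for k
    by (induction k) (simp_all add: zero replicate_append_same)
  have "(\<Inter>n. region (stage_at (map b [0..<n]))) = (\<Inter>k. region (stage_at (?x @ replicate k 0)))"
  proof (intro equalityI INT_greatest)
    fix k
    show "(\<Inter>n. region (stage_at (map b [0..<n]))) \<subseteq> region (stage_at (?x @ replicate k 0))"
      using tail[of k] by (metis INT_lower UNIV_I)
  next
    fix n
    have "region (stage_at (?x @ replicate n 0)) \<subseteq> region (stage_at (map b [0..<n]))"
      using region_stage_at_antimono[OF prefix_map_upt[of n "N + n" b]] tail[of n] by simp
    then show "(\<Inter>k. region (stage_at (?x @ replicate k 0))) \<subseteq> region (stage_at (map b [0..<n]))"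
      by blast
  qed
  then show ?thesis using fruit_zero_tail[of ?x] by simp
next
  case False
  then show ?thesis using fruit_infinitely_nonzero by (auto simp: not_le)
qed

section \<open>The foliage tree\<close>

definition leaf :: "nat list \<Rightarrow> (nat \<Rightarrow> nat) set" where
  "leaf x = Y \<inter> region (stage_at x)"

lemma leaf_nonempty: "leaf x \<noteq> {}"
proof -
  define b where "b i = (if i < length x then x ! i else 0)" for i
  have "map b [0..<length x] = x" by (intro nth_equalityI) (simp_all add: b_def)
  moreover obtain q where "Y \<inter> (\<Inter>n. region (stage_at (map b [0..<n]))) = {q}"
    using fruit_branch[of b] by (elim exE)
  then have "q \<in> Y \<inter> region (stage_at (map b [0..<length x]))" by blast
  ultimately have "q \<in> leaf x" by (simp add: leaf_def)
  then show ?thesis by blast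
qed

lemma baire_foliage_tree_leaf: "baire_foliage_tree Y UNIV strict_prefix leaf"
proof (rule baire_foliage_tree_strict_prefix)
  show "openin (top_of_set Y) (leaf x)" for x
    unfolding leaf_def region_def using open_S_leaf by (auto intro: openin_open_Int)
  show "leaf [] = Y"
    by (simp add: leaf_def region_def pieces_def stage_at_Nil S_leaf_def)
  show "leaf x = (\<Union>j. leaf (x @ [j]))" for x
    using region_eq_UN_child[OF wf_stage_at[of x]] by (auto simp: leaf_def)
  show "disjoint_family (\<lambda>j. leaf (x @ [j]))" for x
    using region_child_disjoint[OF wf_stage_at[of x]] by (auto simp: disjoint_family_on_def leaf_def)
  show "\<exists>p. (\<Inter>n. leaf (map b [0..<n])) = {p}" for b
    using fruit_branch[of b] by (simp add: leaf_def)
qed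

lemma shoot_leaf_dominates:
  assumes active: "active_piece (stage_at x) = y"
  shows "shoot UNIV strict_prefix leaf x \<ggreater>\<^sub>f shoot UNIV strict_prefix S_leaf y"
  unfolding dominates_def
proof (intro ballI impI)
  fix D assume "D \<in> shoot UNIV strict_prefix S_leaf y"
  then obtain N where D: "D = (\<Union>n\<in>N. S_leaf (y @ [n]))" and N: "finite (- N)"
    by (auto simp: shoot_strict_prefix)
  define h where "h j = good_digit y (if junk_turn (stage_at x) then j else Suc j)" for j
  have leaf_Suc: "leaf (x @ [Suc j]) = Y \<inter> S_leaf (y @ [h j])" for j
    using active by (simp add: leaf_def child_Suc region_def pieces_def h_def)
  have "inj h" using inj_good_digit[of y] by (auto simp: inj_def h_def)
  define J where "J = Suc ` (h -` N)"
  have "- J \<subseteq> insert 0 (Suc ` (- (h -` N)))"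
  proof
    fix j assume "j \<in> - J"
    then show "j \<in> insert 0 (Suc ` (- (h -` N)))" by (cases j) (auto simp: J_def)
  qed
  moreover have "finite (- (h -` N))" using finite_vimageI[OF N \<open>inj h\<close>] by (simp add: vimage_Compl)
  ultimately have J: "finite (- J)" using finite_subset by blast
  define G where "G = (\<Union>j\<in>J. leaf (x @ [j]))"
  have "G \<in> shoot UNIV strict_prefix leaf x" using J by (auto simp: shoot_strict_prefix G_def)
  moreover have "G \<subseteq> D" by (auto simp: G_def J_def D leaf_Suc)
  moreover have "G \<noteq> {}"
  proof -
    obtain j where "j \<notin> - J" using ex_new_if_finite[OF infinite_UNIV_nat J] by blast
    then show ?thesis using leaf_nonempty[of "x @ [j]"] by (auto simp: G_def)
  qed
  ultimately show "\<exists>G\<in>shoot UNIV strict_prefix leaf x. G \<noteq> {} \<and> G \<subseteq> D" by blast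
qed

lemma leaf_shoots_into_S: "shoots_into UNIV strict_prefix leaf UNIV strict_prefix S_leaf"
  unfolding shoots_into_def
proof (intro ballI)
  fix p y assume p: "p \<in> flesh UNIV leaf" and "y \<in> scope UNIV S_leaf p"
  then have "y = map p [0..<length y]" by (simp add: scope_def S_leaf_imp_eq_map)
  then obtain x where x: "y \<in> pieces (stage_at x)" "active_piece (stage_at x) = y"
    using initial_segment_eventually_active by metis
  have "p \<in> S_leaf y" using \<open>y \<in> scope UNIV S_leaf p\<close> by (simp add: scope_def)
  with p x(1) have "x \<in> scope UNIV leaf p" by (auto simp: scope_def flesh_def leaf_def region_def)
  with shoot_leaf_dominates[OF x(2)]
  show "\<exists>x\<in>scope UNIV leaf p. shoot UNIV strict_prefix leaf x \<ggreater>\<^sub>f shoot UNIV strict_prefix S_leaf y"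
    by blast
qed

end

theorem mainTheorem4:
  fixes U :: "nat \<Rightarrow> (nat \<Rightarrow> nat) set"
  assumes "\<And>n. open (U n)" and "\<And>n. pi_dense (U n)"
  shows "\<exists>(Q :: nat list set) lt l.
           baire_foliage_tree (\<Inter>n. U n) Q lt l \<and>
           shoots_into Q lt l (UNIV :: nat list set) strict_prefix S_leaf"
proof -
  interpret pi_dense_Gdelta U by unfold_locales (use assms in auto)
  show ?thesis using baire_foliage_tree_leaf leaf_shoots_into_S unfolding Y_def by blast
qed

end
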